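(* Let $n,N,L\ge 1$ be integers, $0<p<1$ and $0<\epsilon_2<1$. Define $$N_{\mathsf{Th}}=\frac{\log_2\left(\left(\frac{\epsilon_2+2^{n}}{2^{n}}\right)^{1/n}-1\right)}{\log_2(p)}.$$ If $N\ge N_{\mathsf{Th}}$, then in the random model described in the context, with probability at least $1-\epsilon_2$ the set $\mathbb{L}_{\mathcal{P}^*,\mathcal{Y}}$ of labellings of the true partitioning equals $\{\mathcal{L}^*\}$.
   Context: Model: Let $M=2^n$ and $C=\{0,1\}^n=\{\mathbf{x}_1,\dots,\mathbf{x}_M\}$ (addresses). Data parts $\mathbf{d}_1,\dots,\mathbf{d}_M$ are independent and uniform on $\{0,1\}^L$; strand $i$ is $(\mathbf{x}_i,\mathbf{d}_i)$. Each strand is transmitted $N$ times through $\mathsf{BEC}(p)$ (each symbol independently replaced by $*$ with probability $p$, independently across transmissions and strands); $\mathcal{S}_N((\mathbf{x}_i,\mathbf{d}_i))$ is the multiset of the $N$ reads of strand $i$ and $\mathcal{Y}$ the multiset of all $MN$ reads. An address $\mathbf{x}$ is compatible with a read $(\mathbf{y},\mathbf{d}')$ if $\mathbf{x}$ and $\mathbf{y}$ coincide at all non-erased positions of $\mathbf{y}$. The true partitioning is $\mathcal{P}^*=\{P_1,\dots,P_M\}$ with $P_i=\mathcal{S}_N((\mathbf{x}_i,\mathbf{d}_i))$. A labelling of $\mathcal{P}^*$ is a vector $\mathcal{L}$ of $M$ distinct addresses from $C$ such that, for each $i\in[M]$, $\mathcal{L}[i]$ is compatible with every read in $P_i$; $\mathbb{L}_{\mathcal{P}^*,\mathcal{Y}}$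 is the set of all such labellings, and the true labelling $\mathcal{L}^*$ has $\mathcal{L}^*[i]=\mathbf{x}_i$ for all $i$. *)

theory Defs
  imports "HOL-Probability.Probability" "HOL-Library.Multiset"
begin

text \<open>Binary words are lists of booleans; a received symbol is a bool option,
  where None stands for the erasure symbol *.\<close>

type_synonym word = "bool list"
type_synonym rword = "bool option list"
type_synonym read = "rword \<times> rword"   \<comment> \<open>(address part, data part)\<close>

primrec seq_pmf :: "'a pmf list \<Rightarrow> 'a list pmf" where
  "seq_pmf [] = return_pmf []"
| "seq_pmf (q # qs) = do {x \<leftarrow> q; xs \<leftarrow> seq_pmf qs; return_pmf (x # xs)}"

definition bec_word :: "real \<Rightarrow> word \<Rightarrow> rword pmf" where
  "bec_word p w = map_pmf (\<lambda>es. map2 (\<lambda>e b. if e then None else Some b) es w)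
                     (replicate_pmf (length w) (bernoulli_pmf p))"

definition bec_strand :: "real \<Rightarrow> word \<times> word \<Rightarrow> read pmf" where
  "bec_strand p s = do {y \<leftarrow> bec_word p (fst s); d' \<leftarrow> bec_word p (snd s); return_pmf (y, d')}"

definition reads_pmf :: "real \<Rightarrow> nat \<Rightarrow> word \<times> word \<Rightarrow> read multiset pmf" where
  "reads_pmf p N s = map_pmf mset (replicate_pmf N (bec_strand p s))"

text \<open>The outcome is the true
  partitioning P* = [P_0, ..., P_{M-1}], P_i = S_N((x_i, d_i)).\<close>
definition partition_pmf ::
  "nat \<Rightarrow> nat \<Rightarrow> nat \<Rightarrow> real \<Rightarrow> (nat \<Rightarrow> word) \<Rightarrow> read multiset list pmf" where
  "partition_pmf n L N p addr =
     seq_pmf (map (\<lambda>i. do {d \<leftarrow> pmf_of_set {d :: word. length d = L};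
                            reads_pmf p N (addr i, d)}) [0..<2 ^ n])"

definition addrs :: "nat \<Rightarrow> word set" where
  "addrs n = {x. length x = n}"

definition compatible :: "word \<Rightarrow> read \<Rightarrow> bool" where
  "compatible x r = list_all2 (\<lambda>a b. b = None \<or> b = Some a) x (fst r)"

definition labellings :: "nat \<Rightarrow> read multiset list \<Rightarrow> word list set" where
  "labellings n Ps = {Lab. length Lab = 2 ^ n \<and> distinct Lab \<and> set Lab \<subseteq> addrs n \<and>
      (\<forall>i < 2 ^ n. \<forall>r \<in># Ps ! i. compatible (Lab ! i) r)}"

end

theory Submission
  imports Defs
begin

text \<open>A labelling must give cluster \<open>i\<close> an address compatible with all of its reads, and the
  true address \<open>x\<^sub>i\<close> always is. If every address position is unerased in at least one read of
  every cluster, \<open>x\<^sub>i\<close> is the only compatible address, so the true labelling is the only one.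
  A fixed position of a fixed cluster is erased in all \<open>N\<close> reads with probability \<open>p\<^sup>N\<close>, so by
  the union bound this fails with probability at most \<open>2\<^sup>n n p\<^sup>N\<close>; the threshold \<open>N\<^sub>T\<^sub>h\<close> is
  chosen so that \<open>(1 + p\<^sup>N)\<^sup>n \<le> 1 + \<epsilon>\<^sub>2 / 2\<^sup>n\<close>, and Bernoulli's inequality turns this into
  \<open>2\<^sup>n n p\<^sup>N \<le> \<epsilon>\<^sub>2\<close>.\<close>

lemma map_pmf_nth_seq_pmf:
  "i < length qs \<Longrightarrow> map_pmf (\<lambda>xs. xs ! i) (seq_pmf qs) = qs ! i"
proof (induction qs arbitrary: i)
  case (Cons q qs)
  show ?case
  proof (cases i)
    case 0
    then show ?thesis by (simp add: map_bind_pmf bind_return_pmf')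
  next
    case (Suc k)
    have "map_pmf (\<lambda>xs. xs ! i) (seq_pmf (q # qs))
        = bind_pmf q (\<lambda>_. map_pmf (\<lambda>xs. xs ! k) (seq_pmf qs))"
      using Suc by (simp add: map_bind_pmf map_pmf_def[symmetric] pmf.map_comp o_def)
    then show ?thesis using Cons Suc by simp
  qed
qed simp

lemma set_seq_pmfD:
  "xs \<in> set_pmf (seq_pmf qs) \<Longrightarrow> i < length qs \<Longrightarrow> xs ! i \<in> set_pmf (qs ! i)"
  by (induction qs arbitrary: xs i) (auto simp: nth_Cons split: nat.splits)

lemma replicate_pmf_eq_seq_pmf: "replicate_pmf N q = seq_pmf (replicate N q)"
  by (induction N) auto

lemma replicate_pmf_Suc_eq_pair_pmf:
  "replicate_pmf (Suc N) q = map_pmf (\<lambda>(x, xs). x # xs) (pair_pmf q (replicate_pmf N q))"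
  by (simp add: pair_pmf_def map_bind_pmf bind_assoc_pmf bind_return_pmf)

lemma measure_pair_pmf_Times:
  "measure_pmf.prob (pair_pmf M N) (A \<times> B) = measure_pmf.prob M A * measure_pmf.prob N B"
proof -
  have "A \<times> B \<inter> set_pmf (pair_pmf M N) = (A \<inter> set_pmf M) \<times> (B \<inter> set_pmf N)"
    by auto
  then show ?thesis
    using measure_pmf_prob_product[of "A \<inter> set_pmf M" "B \<inter> set_pmf N" M N]
    by (metis measure_Int_set_pmf countable_Int2 countable_set_pmf)
qed

lemma prob_replicate_pmf_list_all:
  "measure_pmf.prob (replicate_pmf N q) {xs. list_all P xs} = measure_pmf.prob q {x. P x} ^ N"
proof (induction N)
  case (Suc N)
  have "measure_pmf.prob (replicate_pmf (Suc N) q) {xs. list_all P xs}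
      = measure_pmf.prob (pair_pmf q (replicate_pmf N q)) ({x. P x} \<times> {xs. list_all P xs})"
    unfolding replicate_pmf_Suc_eq_pair_pmf measure_map_pmf
    by (intro arg_cong[where f = "measure_pmf.prob _"]) auto
  then show ?case
    by (simp add: measure_pair_pmf_Times Suc)
qed simp

lemma measure_bind_pmf_const:
  assumes "\<And>x. x \<in> set_pmf M \<Longrightarrow> measure_pmf.prob (f x) A = c"
  shows "measure_pmf.prob (bind_pmf M f) A = c"
proof -
  obtain x where "x \<in> set_pmf M"
    using set_pmf_not_empty[of M] by blast
  then have "c \<ge> 0"
    using assms by force
  have "emeasure (bind_pmf M f) A = (\<integral>\<^sup>+_. ennreal c \<partial>M)"
    unfolding emeasure_bind_pmf
    by (intro nn_integral_cong_AE AE_pmfI) (simp add: measure_pmf.emeasure_eq_measure assms)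
  also have "\<dots> = ennreal c"
    by (simp add: measure_pmf.emeasure_space_1)
  finally show ?thesis
    using \<open>c \<ge> 0\<close> by (simp add: measure_pmf.emeasure_eq_measure)
qed

lemma bec_word_erased_nth:
  assumes "0 \<le> p" "p \<le> 1" "j < length x"
  shows "map_pmf (\<lambda>y. y ! j = None) (bec_word p x) = bernoulli_pmf p"
proof -
  have "map_pmf (\<lambda>y. y ! j = None) (bec_word p x)
      = map_pmf (\<lambda>es. es ! j) (replicate_pmf (length x) (bernoulli_pmf p))"
    unfolding bec_word_def pmf.map_comp
    by (rule map_pmf_cong) (use assms in \<open>auto simp: set_replicate_pmf\<close>)
  also have "\<dots> = bernoulli_pmf p"
    using assms by (simp add: replicate_pmf_eq_seq_pmf map_pmf_nth_seq_pmf)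
  finally show ?thesis .
qed

lemma map_fst_bec_strand: "map_pmf fst (bec_strand p s) = bec_word p (fst s)"
  by (simp add: bec_strand_def pair_pmf_def[symmetric] map_fst_pair_pmf)

lemma compatible_set_bec_strand:
  assumes "r \<in> set_pmf (bec_strand p s)"
  shows "compatible (fst s) r"
proof -
  have "fst r \<in> set_pmf (bec_word p (fst s))"
    using assms by (simp flip: map_fst_bec_strand)
  then obtain es where "length es = length (fst s)"
    and "fst r = map2 (\<lambda>e b. if e then None else Some b) es (fst s)"
    by (auto simp: bec_word_def set_replicate_pmf)
  then show ?thesis by (auto simp: compatible_def list_all2_conv_all_nth)
qed

lemma compatible_set_reads_pmf:
  "P \<in> set_pmf (reads_pmf p N s) \<Longrightarrow> r \<in># P \<Longrightarrow> compatible (fst s) r"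
  by (auto simp: reads_pmf_def set_replicate_pmf intro: compatible_set_bec_strand)

lemma prob_reads_pmf_all_erased:
  assumes "0 \<le> p" "p \<le> 1" "j < length (fst s)"
  shows "measure_pmf.prob (reads_pmf p N s) {P. \<forall>r\<in>#P. fst r ! j = None} = p ^ N"
proof -
  have "measure_pmf.prob (bec_strand p s) {r. fst r ! j = None}
      = measure_pmf.prob (map_pmf (\<lambda>y. y ! j = None) (bec_word p (fst s))) {True}"
    by (simp flip: map_fst_bec_strand add: vimage_def)
  also have "\<dots> = p"
    using assms by (simp add: bec_word_erased_nth measure_pmf_single)
  finally have erased: "measure_pmf.prob (bec_strand p s) {r. fst r ! j = None} = p" .
  have "measure_pmf.prob (reads_pmf p N s) {P. \<forall>r\<in>#P. fst r ! j = None}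
      = measure_pmf.prob (replicate_pmf N (bec_strand p s)) {rs. list_all (\<lambda>r. fst r ! j = None) rs}"
    unfolding reads_pmf_def measure_map_pmf
    by (intro arg_cong[where f = "measure_pmf.prob _"]) (auto simp: list_all_iff)
  also have "\<dots> = p ^ N"
    by (simp only: prob_replicate_pmf_list_all erased)
  finally show ?thesis .
qed

definition revealed :: "read multiset \<Rightarrow> nat \<Rightarrow> bool" where
  "revealed P j \<longleftrightarrow> (\<exists>r\<in>#P. fst r ! j \<noteq> None)"

lemma compatible_revealed_unique:
  assumes "length x = n" "length y = n" "\<forall>j<n. revealed P j"
    and "\<forall>r\<in>#P. compatible x r" "\<forall>r\<in>#P. compatible y r"
  shows "x = y"
proof (rule nth_equalityI)
  fix j assume "j < length x"
  then obtain r where r: "r \<in># P" "fst r ! j \<noteq> None" "j < n"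
    using assms(1,3) by (auto simp: revealed_def)
  have "list_all2 (\<lambda>a b. b = None \<or> b = Some a) x (fst r)"
    "list_all2 (\<lambda>a b. b = None \<or> b = Some a) y (fst r)"
    using assms(4,5) r(1) by (auto simp: compatible_def)
  then have "fst r ! j = Some (x ! j)" "fst r ! j = Some (y ! j)"
    using assms(1,2) r(2,3) by (auto dest: list_all2_nthD)
  then show "x ! j = y ! j" by simp
qed (use assms in simp)

lemma labellings_eq_true_labelling:
  assumes bij: "bij_betw addr {..<2 ^ n} (addrs n)"
    and true_compatible: "\<forall>i<2 ^ n. \<forall>r\<in>#Ps ! i. compatible (addr i) r"
    and all_revealed: "\<forall>i<2 ^ n. \<forall>j<n. revealed (Ps ! i) j"
  shows "labellings n Ps = {map addr [0..<2 ^ n]}"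
proof (intro equalityI subsetI)
  fix Lab assume "Lab \<in> labellings n Ps"
  then have Lab: "length Lab = 2 ^ n" "set Lab \<subseteq> addrs n"
    "\<forall>i < 2 ^ n. \<forall>r \<in># Ps ! i. compatible (Lab ! i) r"
    by (auto simp: labellings_def)
  have "Lab ! i = addr i" if "i < 2 ^ n" for i
  proof (rule compatible_revealed_unique)
    have "Lab ! i \<in> set Lab"
      using Lab(1) that by simp
    then show "length (Lab ! i) = n"
      using Lab(2) by (auto simp: addrs_def)
    show "length (addr i) = n"
      using bij_betw_apply[OF bij] that by (auto simp: addrs_def)
  qed (use Lab(3) true_compatible all_revealed that in auto)
  then show "Lab \<in> {map addr [0..<2 ^ n]}"
    using Lab(1) by (auto intro!: nth_equalityI)
next
  fix Lab assume "Lab \<in> {map addr [0..<2 ^ n]}"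
  moreover have "inj_on addr (set [0..<2 ^ n])"
    using bij_betw_imp_inj_on[OF bij] by (simp add: lessThan_atLeast0)
  ultimately show "Lab \<in> labellings n Ps"
    using bij_betw_apply[OF bij] true_compatible
    by (auto simp: labellings_def distinct_map)
qed

lemma set_partition_pmfD:
  assumes "Ps \<in> set_pmf (partition_pmf n L N p addr)" "i < 2 ^ n" "r \<in># Ps ! i"
  shows "compatible (addr i) r"
proof -
  have "Ps ! i \<in> set_pmf (pmf_of_set {d. length d = L} \<bind> (\<lambda>d. reads_pmf p N (addr i, d)))"
    using set_seq_pmfD[OF assms(1)[unfolded partition_pmf_def]] assms(2) by simp
  then obtain d where "Ps ! i \<in> set_pmf (reads_pmf p N (addr i, d))"
    by auto
  from compatible_set_reads_pmf[OF this assms(3)] show ?thesis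
    by simp
qed

lemma labellings_partition_pmf:
  assumes "bij_betw addr {..<2 ^ n} (addrs n)" "Ps \<in> set_pmf (partition_pmf n L N p addr)"
    and "\<forall>i<2 ^ n. \<forall>j<n. revealed (Ps ! i) j"
  shows "labellings n Ps = {map addr [0..<2 ^ n]}"
  using assms(2) by (intro labellings_eq_true_labelling assms(1,3)) (blast intro: set_partition_pmfD)

lemma prob_partition_pmf_unrevealed:
  assumes "0 \<le> p" "p \<le> 1" "i < 2 ^ n" "j < length (addr i)"
  shows "measure_pmf.prob (partition_pmf n L N p addr) {Ps. \<not> revealed (Ps ! i) j} = p ^ N"
proof -
  have "measure_pmf.prob (partition_pmf n L N p addr) {Ps. \<not> revealed (Ps ! i) j}
      = measure_pmf.prob (map_pmf (\<lambda>Ps. Ps ! i) (partition_pmf n L N p addr))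
          {P. \<forall>r\<in>#P. fst r ! j = None}"
    by (simp add: revealed_def vimage_def)
  also have "map_pmf (\<lambda>Ps. Ps ! i) (partition_pmf n L N p addr)
      = pmf_of_set {d. length d = L} \<bind> (\<lambda>d. reads_pmf p N (addr i, d))"
    using assms(3) by (simp add: partition_pmf_def map_pmf_nth_seq_pmf)
  also have "measure_pmf.prob \<dots> {P. \<forall>r\<in>#P. fst r ! j = None} = p ^ N"
    using assms by (intro measure_bind_pmf_const) (simp add: prob_reads_pmf_all_erased)
  finally show ?thesis .
qed

lemma prob_partition_pmf_all_revealed:
  assumes "0 \<le> p" "p \<le> 1" "\<forall>i<2 ^ n. length (addr i) = n"
  shows "measure_pmf.prob (partition_pmf n L N p addr) {Ps. \<forall>i<2 ^ n. \<forall>j<n. revealed (Ps ! i) j}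
           \<ge> 1 - 2 ^ n * real n * p ^ N"
proof -
  let ?\<Omega> = "partition_pmf n L N p addr"
  let ?I = "{..<(2::nat) ^ n} \<times> {..<n}"
  let ?unrevealed = "\<lambda>(i, j). {Ps. \<not> revealed (Ps ! i) j}"
  have "UNIV - {Ps. \<forall>i<2 ^ n. \<forall>j<n. revealed (Ps ! i) j} = (\<Union>ij\<in>?I. ?unrevealed ij)"
    by auto
  then have "measure_pmf.prob ?\<Omega> (UNIV - {Ps. \<forall>i<2 ^ n. \<forall>j<n. revealed (Ps ! i) j})
      \<le> (\<Sum>ij\<in>?I. measure_pmf.prob ?\<Omega> (?unrevealed ij))"
    by (simp only:) (rule measure_pmf.finite_measure_subadditive_finite; simp)
  also have "\<dots> = (\<Sum>ij\<in>?I. p ^ N)"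
    using assms by (intro sum.cong) (auto simp: prob_partition_pmf_unrevealed)
  also have "\<dots> = 2 ^ n * real n * p ^ N"
    by (simp add: card_cartesian_product)
  finally show ?thesis
    using measure_pmf.prob_compl[of "{Ps. \<forall>i<2 ^ n. \<forall>j<n. revealed (Ps ! i) j}" ?\<Omega>] by simp
qed

text \<open>The threshold is \<open>log\<^sub>p t\<close> with \<open>(1 + t)\<^sup>n = 1 + \<epsilon> / 2\<^sup>n\<close>.\<close>
lemma union_bound_le_of_threshold:
  fixes n N :: nat and p eps :: real
  assumes "n \<ge> 1" "0 < p" "p < 1" "0 < eps"
    and "real N \<ge> log 2 (((eps + 2 ^ n) / 2 ^ n) powr (1 / real n) - 1) / log 2 p"
  shows "2 ^ n * real n * p ^ N \<le> eps"
proof -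
  define a :: real where "a = (eps + 2 ^ n) / 2 ^ n"
  define t where "t = a powr (1 / real n) - 1"
  have "a > 1"
    using assms by (simp add: a_def field_simps)
  then have "t > 0"
    using assms by (simp add: t_def gr_one_powr)
  have "real N * log 2 p \<le> log 2 t"
    using assms(5) \<open>0 < p\<close> \<open>p < 1\<close> unfolding a_def[symmetric] t_def[symmetric]
    by (simp add: neg_divide_le_eq mult.commute)
  then have "log 2 (p ^ N) \<le> log 2 t"
    using \<open>0 < p\<close> by (simp add: log_nat_power)
  then have "p ^ N \<le> t"
    using \<open>0 < p\<close> \<open>t > 0\<close> by simp
  have "1 + real n * p ^ N \<le> (1 + p ^ N) ^ n"
    using \<open>0 < p\<close> by (intro Bernoulli_inequality) (smt (verit) zero_le_power)
  also have "\<dots> \<le> (1 + t) ^ n"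
    using \<open>p ^ N \<le> t\<close> assms by (intro power_mono) auto
  also have "(1 + t) ^ n = a"
    using \<open>a > 1\<close> assms by (simp add: t_def powr_realpow[symmetric] powr_powr)
  finally show ?thesis
    by (simp add: a_def field_simps)
qed

theorem lemma4:
  fixes n N L :: nat and p eps2 :: real and addr :: "nat \<Rightarrow> bool list"
  assumes "n \<ge> 1" and "N \<ge> 1" and "L \<ge> 1"
    and "0 < p" and "p < 1" and "0 < eps2" and "eps2 < 1"
    and "bij_betw addr {..<2 ^ n} (addrs n)"
    and "real N \<ge> log 2 (((eps2 + 2 ^ n) / 2 ^ n) powr (1 / real n) - 1) / log 2 p"
  shows "measure_pmf.prob (partition_pmf n L N p addr)
           {Ps. labellings n Ps = {map addr [0..<2 ^ n]}} \<ge> 1 - eps2"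
proof -
  let ?\<Omega> = "partition_pmf n L N p addr"
  let ?all_revealed = "{Ps. \<forall>i<2 ^ n. \<forall>j<n. revealed (Ps ! i) j}"
  have unique: "?all_revealed \<inter> set_pmf ?\<Omega> \<subseteq> {Ps. labellings n Ps = {map addr [0..<2 ^ n]}}"
    using labellings_partition_pmf[OF assms(8)] by blast
  have "1 - eps2 \<le> 1 - 2 ^ n * real n * p ^ N"
    using union_bound_le_of_threshold[OF assms(1,4,5,6,9)] by simp
  also have "\<dots> \<le> measure_pmf.prob ?\<Omega> ?all_revealed"
    using assms(4,5) bij_betw_apply[OF assms(8)]
    by (intro prob_partition_pmf_all_revealed) (auto simp: addrs_def)
  also have "\<dots> = measure_pmf.prob ?\<Omega> (?all_revealed \<inter> set_pmf ?\<Omega>)"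
    by (simp add: measure_Int_set_pmf)
  also have "\<dots> \<le> measure_pmf.prob ?\<Omega> {Ps. labellings n Ps = {map addr [0..<2 ^ n]}}"
    using unique by (rule measure_pmf.finite_measure_mono) simp
  finally show ?thesis .
qed

end
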